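(* For a one-parameter family $\rho(\theta)=\sum_{k=1}^d p_k(\theta)|w_k(\theta)\rangle\langle w_k(\theta)|$ with a chosen smooth spectral decomposition as in the context, equality $H_{SLD}(\theta)=C_L(\theta)$ holds at $\theta$ if and only if $\langle w_j'(\theta)|w_k(\theta)\rangle=0$ for all $j\neq k$ with $p_j(\theta)>0$ and $p_k(\theta)>0$. In particular, if $\rho(\theta)$ is a pure state then $C_L(\theta)=H_{SLD}(\theta)$.
   Context: Let $I\subseteq\mathbb{R}$ be an open interval and $\rho(\theta)=\sum_{k=1}^d p_k(\theta)|w_k(\theta)\rangle\langle w_k(\theta)|$, $\theta\in I$, where $p_1,\dots,p_d:I\to[0,1]$ are smooth with $\sum_k p_k=1$, and $|w_1(\theta)\rangle,\dots,|w_d(\theta)\rangle$ is an orthonormal basis of $\mathbb{C}^d$ depending smoothly on $\theta$. Write $|w_k'\rangle=\frac{d}{d\theta}|w_k(\theta)\rangle$. Convention: in sums $\sum_i \frac{1}{p_i}(\cdot)^2$, indices with $p_i(\theta)=0$ are omitted. The $C_L$ quantum information is $$C_L(\theta)=\sum_i\frac{1}{p_i}\Big(\frac{dp_i}{d\theta}\Big)^2+4\sum_{j<k}(p_j+p_k)|\langle w_j'|w_k\rangle|^2 .$$ The SLD quantum information is $H_{SLD}(\theta)=\mathrm{tr}\{\rho(\theta)\lambda(\theta)^2\}$, where $\lambda(\theta)$ is any Hermitian solution of $\frac{d\rho}{d\theta}=\frac12(\rho\lambda+\lambda\rho)$. *)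

theory Defs
  imports "HOL-Analysis.Analysis"
begin

fun iter_vderiv :: "nat \<Rightarrow> (real \<Rightarrow> 'a::real_normed_vector) \<Rightarrow> real \<Rightarrow> 'a" where
  "iter_vderiv 0 f = f"
| "iter_vderiv (Suc m) f = (\<lambda>t. vector_derivative (iter_vderiv m f) (at t))"

definition smooth_on :: "real set \<Rightarrow> (real \<Rightarrow> 'a::real_normed_vector) \<Rightarrow> bool" where
  "smooth_on I f \<longleftrightarrow> (\<forall>m. \<forall>t\<in>I. iter_vderiv m f differentiable (at t))"

definition braket :: "complex^'n \<Rightarrow> complex^'n \<Rightarrow> complex" where
  "braket a b = (\<Sum>i\<in>UNIV. cnj (a $ i) * b $ i)"

definition ketbra :: "complex^'n \<Rightarrow> complex^'n \<Rightarrow> complex^'n^'n" where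
  "ketbra a b = (\<chi> i j. a $ i * cnj (b $ j))"

definition hermitian :: "complex^'n^'n \<Rightarrow> bool" where
  "hermitian A \<longleftrightarrow> (\<forall>i j. A $ j $ i = cnj (A $ i $ j))"

definition rho :: "(real \<Rightarrow> 'n::finite \<Rightarrow> real) \<Rightarrow> (real \<Rightarrow> 'n \<Rightarrow> complex^'n) \<Rightarrow> real \<Rightarrow> complex^'n^'n" where
  "rho p w t = (\<Sum>k\<in>UNIV. p t k *\<^sub>R ketbra (w t k) (w t k))"

definition wder :: "(real \<Rightarrow> 'n \<Rightarrow> complex^'n) \<Rightarrow> real \<Rightarrow> 'n \<Rightarrow> complex^'n" where
  "wder w t k = vector_derivative (\<lambda>s. w s k) (at t)"

definition C_L :: "(real \<Rightarrow> 'n::{finite,linorder} \<Rightarrow> real) \<Rightarrow> (real \<Rightarrow> 'n::{finite,linorder} \<Rightarrow> complex^'n::{finite,linorder}) \<Rightarrow> real \<Rightarrow> real" where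
  "C_L p w t =
     (\<Sum>i\<in>{i. p t i \<noteq> 0}. (deriv (\<lambda>s. p s i) t)\<^sup>2 / p t i)
   + 4 * (\<Sum>(j,k)\<in>{(j,k). j < k}. (p t j + p t k) * (cmod (braket (wder w t j) (w t k)))\<^sup>2)"

definition is_SLD :: "(real \<Rightarrow> complex^'n::finite^'n) \<Rightarrow> real \<Rightarrow> complex^'n^'n \<Rightarrow> bool" where
  "is_SLD r t L \<longleftrightarrow> hermitian L \<and>
     vector_derivative r (at t) = (1/2) *\<^sub>R (r t ** L + L ** r t)"

end

theory Submission
  imports Defs
begin

text \<open>
  Put \<Lambda>_jk = <w_j|\<lambda>|w_k> and \<alpha>_jk = <w_j'|w_k>. Differentiating orthonormality gives
  <w_j|w_k'> = -\<alpha>_jk, so in the eigenbasis the SLD equation reads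
  (p_j + p_k)/2 \<cdot> \<Lambda>_jk = \<delta>_jk p_j' + (p_j - p_k) \<alpha>_jk.
  In H_SLD = \<Sum>_jk p_j |\<Lambda>_jk|^2 the diagonal contributes \<Sum> p_j'^2 / p_j and each pair j < k
  contributes 4 (p_j - p_k)^2 |\<alpha>_jk|^2 / (p_j + p_k), hence
  C_L - H_SLD = \<Sum>_{j<k} 16 p_j p_k |\<alpha>_jk|^2 / (p_j + p_k) \<ge> 0,
  which vanishes exactly when \<alpha>_jk = 0 whenever j \<noteq> k and p_j, p_k > 0.
  A pure state has at most one positive eigenvalue, so for it the condition is vacuous.
\<close>

definition orthonormal :: "('i \<Rightarrow> complex^'n) \<Rightarrow> bool" where
  "orthonormal w \<longleftrightarrow> (\<forall>j k. braket (w j) (w k) = (if j = k then 1 else 0))"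

lemma orthonormalD: "orthonormal w \<Longrightarrow> braket (w j) (w k) = (if j = k then 1 else 0)"
  by (simp add: orthonormal_def)

lemma sum_matrix_mult_vec: "(\<Sum>k\<in>A. M k) *v x = (\<Sum>k\<in>A. M k *v x)"
  by (induction A rule: infinite_finite_induct) (simp_all add: matrix_vector_mult_add_rdistrib)

lemma scaleR_matrix_mult_vec: "(r *\<^sub>R M) *v (x::complex^'n) = of_real r *s (M *v x)"
  by (simp add: vec_eq_iff matrix_vector_mult_def sum_distrib_left mult.assoc)
     (simp add: scaleR_conv_of_real)

lemma sum_matrix_mult: "(\<Sum>k\<in>A. X k) ** M = (\<Sum>k\<in>A. X k ** (M::'a::semiring_1^'n^'m))"
  by (simp add: vec_eq_iff matrix_matrix_mult_def sum_distrib_right) (auto intro: sum.swap)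

lemma trace_sum: "trace (\<Sum>k\<in>A. X k) = (\<Sum>k\<in>A. trace (X k :: 'a::comm_semiring_1^'n^'n))"
  by (induction A rule: infinite_finite_induct) (simp_all add: trace_add trace_0[unfolded mat_0])

lemma trace_scaleR: "trace (r *\<^sub>R (X::complex^'n^'n)) = of_real r * trace X"
  by (simp add: trace_def sum_distrib_left) (simp add: scaleR_conv_of_real)

lemma braket_cnj: "cnj (braket a b) = braket b a"
  by (simp add: braket_def mult.commute)

lemma braket_add_right: "braket a (b + c) = braket a b + braket a c"
  by (simp add: braket_def distrib_left sum.distrib)

lemma braket_scalar_mult_right: "braket a (c *s b) = c * braket a b"
  by (simp add: braket_def sum_distrib_left mult_ac)

lemma braket_sum_right: "braket a (\<Sum>k\<in>A. b k) = (\<Sum>k\<in>A. braket a (b k))"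
  by (simp add: braket_def sum_distrib_left) (rule sum.swap)

lemma ketbra_mult_vec: "ketbra a b *v c = braket b c *s a"
  by (simp add: vec_eq_iff ketbra_def braket_def matrix_vector_mult_def sum_distrib_left mult_ac)

lemma trace_ketbra_mult: "trace (ketbra a b ** M) = braket b (M *v a)"
  by (simp add: trace_def ketbra_def braket_def matrix_matrix_mult_def matrix_vector_mult_def
      sum_distrib_left mult_ac) (rule sum.swap)

lemma hermitian_braket:
  assumes "hermitian L"
  shows "braket a (L *v b) = cnj (braket b (L *v a))"
proof -
  have L: "cnj (L $ j $ i) = L $ i $ j" for i j
    using assms by (metis hermitian_def)
  have "cnj (braket b (L *v a)) = (\<Sum>j\<in>UNIV. \<Sum>i\<in>UNIV. cnj (a $ i) * L $ i $ j * b $ j)"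
    by (simp add: braket_def matrix_vector_mult_def sum_distrib_left L mult_ac)
  also have "\<dots> = braket a (L *v b)"
    by (subst sum.swap) (simp add: braket_def matrix_vector_mult_def sum_distrib_left mult_ac)
  finally show ?thesis ..
qed

lemma bounded_bilinear_braket: "bounded_bilinear braket"
  unfolding bilinear_conv_bounded_bilinear[symmetric] bilinear_def
  by (intro conjI allI linearI)
     (simp_all add: braket_def sum.distrib distrib_left distrib_right scaleR_sum_right)

lemma bounded_bilinear_ketbra: "bounded_bilinear ketbra"
  unfolding bilinear_conv_bounded_bilinear[symmetric] bilinear_def
  by (intro conjI allI linearI) (simp_all add: ketbra_def vec_eq_iff distrib_left distrib_right)

lemma orthonormal_braket_sum:
  fixes w :: "'i::finite \<Rightarrow> complex^'n"
  assumes "orthonormal w"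
  shows "braket (w j) (\<Sum>k\<in>UNIV. c k *s w k) = c j"
proof -
  have "braket (w j) (\<Sum>k\<in>UNIV. c k *s w k) = (\<Sum>k\<in>UNIV. if j = k then c k else 0)"
    using assms unfolding braket_sum_right
    by (intro sum.cong) (simp_all add: orthonormal_def braket_scalar_mult_right)
  then show ?thesis
    by simp
qed

lemma orthonormal_sum_scalar_mult:
  fixes w :: "'i::finite \<Rightarrow> complex^'n"
  assumes "orthonormal w"
  shows "(\<Sum>i\<in>UNIV. (c i * braket (w i) (w k)) *s v i) = c k *s v k"
proof -
  have "(\<Sum>i\<in>UNIV. (c i * braket (w i) (w k)) *s v i) = (\<Sum>i\<in>UNIV. if i = k then c k *s v k else 0)"
    using assms by (intro sum.cong) (simp_all add: orthonormal_def)
  then show ?thesis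
    by simp
qed

lemma orthonormal_expansion:
  fixes w :: "'n::finite \<Rightarrow> complex^'n"
  assumes "orthonormal w"
  shows "x = (\<Sum>k\<in>UNIV. braket (w k) x *s w k)"
proof -
  define U :: "complex^'n^'n" where "U = (\<chi> a k. w k $ a)"
  define U' :: "complex^'n^'n" where "U' = (\<chi> k a. cnj (w k $ a))"
  have "U' ** U = mat 1"
    using assms by (simp add: vec_eq_iff matrix_matrix_mult_def U_def U'_def mat_def
        orthonormal_def braket_def)
  \<comment> \<open>completeness of the frame: a left inverse of a square matrix is a right inverse\<close>
  then have "U ** U' = mat 1"
    by (rule matrix_left_right_inverse1)
  then have "x = U *v (U' *v x)"
    by (simp add: matrix_vector_mul_assoc)
  also have "\<dots> = (\<Sum>k\<in>UNIV. braket (w k) x *s w k)"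
    by (simp add: vec_eq_iff U_def U'_def matrix_vector_mult_def braket_def mult.commute)
  finally show ?thesis .
qed

lemma rho_mult_vec: "rho p w t *v x = (\<Sum>k\<in>UNIV. (of_real (p t k) * braket (w t k) x) *s w t k)"
  by (simp add: rho_def sum_matrix_mult_vec scaleR_matrix_mult_vec ketbra_mult_vec)

lemma rho_mult_eigenvector:
  assumes "orthonormal (w t)"
  shows "rho p w t *v w t k = of_real (p t k) *s w t k"
proof -
  have "rho p w t *v w t k = (\<Sum>i\<in>UNIV. if i = k then of_real (p t k) *s w t k else 0)"
    using assms unfolding rho_mult_vec by (intro sum.cong) (simp_all add: orthonormal_def)
  then show ?thesis
    by simp
qed

lemma braket_eigenvector_rho:
  "orthonormal (w t) \<Longrightarrow> braket (w t j) (rho p w t *v x) = of_real (p t j) * braket (w t j) x"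
  unfolding rho_mult_vec
  by (rule orthonormal_braket_sum[where c = "\<lambda>k. of_real (p t k) * braket (w t k) x"])

lemma trace_rho_mult: "trace (rho p w t ** M) = (\<Sum>k\<in>UNIV. of_real (p t k) * braket (w t k) (M *v w t k))"
  by (simp add: rho_def sum_matrix_mult trace_sum trace_ketbra_mult trace_scaleR flip: scalar_matrix_assoc)

lemma trace_rho_mult_hermitian_square:
  fixes w :: "real \<Rightarrow> 'n::finite \<Rightarrow> complex^'n"
  assumes "orthonormal (w t)" and "hermitian L"
  shows "trace (rho p w t ** L ** L)
    = of_real (\<Sum>j\<in>UNIV. \<Sum>k\<in>UNIV. p t j * (cmod (braket (w t j) (L *v w t k)))\<^sup>2)"
proof -
  have square: "braket (w t j) ((L ** L) *v w t j)
      = (\<Sum>k\<in>UNIV. braket (w t j) (L *v w t k) * cnj (braket (w t j) (L *v w t k)))" for j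
  proof -
    have "braket (w t j) ((L ** L) *v w t j)
        = braket (w t j) (L *v (\<Sum>k\<in>UNIV. braket (w t k) (L *v w t j) *s w t k))"
      using orthonormal_expansion[OF assms(1), of "L *v w t j"]
      by (simp flip: matrix_vector_mul_assoc)
    also have "\<dots> = (\<Sum>k\<in>UNIV. braket (w t j) (L *v w t k) * braket (w t k) (L *v w t j))"
      by (simp add: vec.sum vector_scalar_commute braket_sum_right braket_scalar_mult_right mult.commute)
    finally show ?thesis
      by (simp only: hermitian_braket[OF assms(2), where b = "w t j"])
  qed
  have "trace (rho p w t ** L ** L) = (\<Sum>j\<in>UNIV. of_real (p t j) * braket (w t j) ((L ** L) *v w t j))"
    by (simp only: trace_rho_mult flip: matrix_mul_assoc)
  also have "\<dots> = of_real (\<Sum>j\<in>UNIV. \<Sum>k\<in>UNIV. p t j * (cmod (braket (w t j) (L *v w t k)))\<^sup>2)"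
    by (simp only: square of_real_sum of_real_mult complex_norm_square sum_distrib_left)
  finally show ?thesis .
qed

lemma pure_rho_eigenvalues:
  assumes "orthonormal (w t)" and "rho p w t = ketbra \<psi> \<psi>" and "j \<noteq> k"
  shows "p t j = 0 \<or> p t k = 0"
proof -
  define x where "x i = braket (w t i) \<psi>" for i
  have entries: "braket (w t i) (rho p w t *v w t l) = x i * cnj (x l)" for i l
    by (simp add: assms(2) ketbra_mult_vec braket_scalar_mult_right x_def braket_cnj mult.commute)
  have eigenvalue: "of_real (p t i) = x i * cnj (x i)" for i
    using entries[of i i] by (simp add: rho_mult_eigenvector[where w = w and t = t, OF assms(1)] braket_scalar_mult_right
        orthonormalD[OF assms(1)])
  have "x j * cnj (x k) = 0"
    using entries[of j k] assms(3)
    by (simp add: rho_mult_eigenvector[where w = w and t = t, OF assms(1)] braket_scalar_mult_right orthonormalD[OF assms(1)])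
  then have "x j = 0 \<or> x k = 0"
    by simp
  then show ?thesis
    using eigenvalue[of j] eigenvalue[of k] by auto
qed

lemma smooth_on_differentiable: "smooth_on I f \<Longrightarrow> t \<in> I \<Longrightarrow> f differentiable (at t)"
  unfolding smooth_on_def by (metis iter_vderiv.simps(1))

lemma braket_derivative_of_constant:
  assumes "open S" and "x \<in> S" and "\<And>t. t \<in> S \<Longrightarrow> braket (f t) (g t) = c"
    and "(f has_vector_derivative f') (at x)" and "(g has_vector_derivative g') (at x)"
  shows "braket (f x) g' + braket f' (g x) = 0"
proof -
  have "((\<lambda>t. braket (f t) (g t)) has_vector_derivative braket (f x) g' + braket f' (g x)) (at x)"
    using bounded_bilinear.has_vector_derivative[OF bounded_bilinear_braket assms(4,5)] .
  moreover have "((\<lambda>t. braket (f t) (g t)) has_vector_derivative 0) (at x)"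
    by (rule has_vector_derivative_transform_within_open[OF has_vector_derivative_const assms(1,2)])
       (simp add: assms(3))
  ultimately show ?thesis
    by (rule vector_derivative_unique_at)
qed

lemma has_vector_derivative_rho:
  assumes "\<And>k. ((\<lambda>s. p s k) has_real_derivative q k) (at t)"
    and "\<And>k. ((\<lambda>s. w s k) has_vector_derivative d k) (at t)"
  shows "(rho p w has_vector_derivative (\<Sum>k\<in>UNIV. q k *\<^sub>R ketbra (w t k) (w t k)
      + p t k *\<^sub>R (ketbra (w t k) (d k) + ketbra (d k) (w t k)))) (at t)"
proof -
  have "rho p w = (\<lambda>s. \<Sum>k\<in>UNIV. p s k *\<^sub>R ketbra (w s k) (w s k))"
    by (simp add: rho_def fun_eq_iff)
  moreover have "((\<lambda>s. p s k *\<^sub>R ketbra (w s k) (w s k)) has_vector_derivative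
      q k *\<^sub>R ketbra (w t k) (w t k) + p t k *\<^sub>R (ketbra (w t k) (d k) + ketbra (d k) (w t k))) (at t)" for k
    using has_vector_derivative_scaleR[OF assms(1)
        bounded_bilinear.has_vector_derivative[OF bounded_bilinear_ketbra assms(2)[of k] assms(2)[of k]]]
    by (simp add: add.commute)
  ultimately show ?thesis
    by (auto intro: has_vector_derivative_sum)
qed

lemma SLD_equation_in_eigenbasis:
  fixes w :: "real \<Rightarrow> 'n::finite \<Rightarrow> complex^'n"
  assumes orth: "orthonormal (w t)"
    and anti: "\<And>j k. braket (w t j) (d k) + braket (d j) (w t k) = 0"
    and SLD: "(\<Sum>k\<in>UNIV. q k *\<^sub>R ketbra (w t k) (w t k)
      + p t k *\<^sub>R (ketbra (w t k) (d k) + ketbra (d k) (w t k)))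
      = (1/2) *\<^sub>R (rho p w t ** L + L ** rho p w t)"
  shows "of_real ((p t j + p t k) / 2) * braket (w t j) (L *v w t k)
    = (if j = k then of_real (q j) else 0) + of_real (p t j - p t k) * braket (d j) (w t k)"
proof -
  let ?\<rho>' = "\<Sum>i\<in>UNIV. q i *\<^sub>R ketbra (w t i) (w t i)
      + p t i *\<^sub>R (ketbra (w t i) (d i) + ketbra (d i) (w t i))"
  have "?\<rho>' *v w t k = of_real (q k) *s w t k + of_real (p t k) *s d k
      + (\<Sum>i\<in>UNIV. (of_real (p t i) * braket (d i) (w t k)) *s w t i)"
    by (simp add: sum_matrix_mult_vec matrix_vector_mult_add_rdistrib scaleR_matrix_mult_vec
        ketbra_mult_vec sum.distrib orthonormal_sum_scalar_mult[OF orth])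
  then have lhs: "braket (w t j) (?\<rho>' *v w t k)
      = (if j = k then of_real (q j) else 0) + of_real (p t k) * braket (w t j) (d k)
        + of_real (p t j) * braket (d j) (w t k)"
    by (simp add: braket_add_right braket_scalar_mult_right orthonormal_braket_sum[OF orth]
        orthonormalD[OF orth])
  have rhs: "braket (w t j) (((1/2) *\<^sub>R (rho p w t ** L + L ** rho p w t)) *v w t k)
      = of_real ((p t j + p t k) / 2) * braket (w t j) (L *v w t k)"
    using orth
    by (simp add: scaleR_matrix_mult_vec matrix_vector_mult_add_rdistrib braket_add_right
        braket_scalar_mult_right braket_eigenvector_rho rho_mult_eigenvector vector_scalar_commute
        flip: matrix_vector_mul_assoc) (simp add: algebra_simps)
  have "braket (w t j) (d k) = - braket (d j) (w t k)"
    using anti[of j k] by (simp add: eq_neg_iff_add_eq_0)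
  moreover have "of_real ((p t j + p t k) / 2) * braket (w t j) (L *v w t k)
      = braket (w t j) (?\<rho>' *v w t k)"
    using rhs by (simp only: SLD)
  ultimately show ?thesis
    unfolding lhs by (simp add: algebra_simps)
qed

lemma sum_split_diagonal_pairs:
  fixes f :: "'n::{finite,linorder} \<Rightarrow> 'n \<Rightarrow> 'a::comm_monoid_add"
  shows "(\<Sum>j\<in>UNIV. \<Sum>k\<in>UNIV. f j k)
    = (\<Sum>j\<in>UNIV. f j j) + (\<Sum>(j,k)\<in>{(j,k). j < k}. f j k + f k j)"
proof -
  have "(\<Sum>j\<in>UNIV. \<Sum>k\<in>UNIV. f j k) = (\<Sum>(j,k)\<in>UNIV. f j k)"
    by (simp add: sum.cartesian_product)
  also have "UNIV = {(j::'n,k). j = k} \<union> ({(j,k). j < k} \<union> {(j,k). k < j})"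
    by auto
  also have "(\<Sum>(j,k)\<in>{(j,k). j = k} \<union> ({(j,k). j < k} \<union> {(j,k). k < j}). f j k)
      = (\<Sum>(j,k)\<in>{(j,k). j = k}. f j k)
        + ((\<Sum>(j,k)\<in>{(j,k). j < k}. f j k) + (\<Sum>(j,k)\<in>{(j,k). k < j}. f j k))"
    by (subst sum.union_disjoint, auto, subst sum.union_disjoint, auto)
  also have "(\<Sum>(j,k)\<in>{(j,k). j = k}. f j k) = (\<Sum>j\<in>UNIV. f j j)"
  proof -
    have "{(j,k). j = k} = (\<lambda>j. (j,j)) ` (UNIV::'n set)"
      by auto
    then show ?thesis
      by (simp add: sum.reindex inj_on_def)
  qed
  also have "(\<Sum>(j,k)\<in>{(j,k). k < j}. f j k) = (\<Sum>(j,k)\<in>{(j,k). j < k}. f k j)"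
  proof -
    have "{(j,k). k < j} = (\<lambda>(j,k). (k,j)) ` {(j::'n,k). j < k}"
      by auto
    moreover have "inj_on (\<lambda>(j,k). (k,j)) {(j::'n,k). j < k}"
      by (auto simp: inj_on_def)
    ultimately show ?thesis
      by (simp add: sum.reindex case_prod_unfold)
  qed
  finally show ?thesis
    by (simp add: sum.distrib case_prod_unfold)
qed

lemma SLD_off_diagonal_identity:
  fixes a b x y :: real
  assumes "0 \<le> a" "0 \<le> b" "0 \<le> x" "0 \<le> y" and "(a + b) * y = 2 * \<bar>a - b\<bar> * x"
  shows "a * y\<^sup>2 + b * y\<^sup>2 + 16 * a * b * x\<^sup>2 / (a + b) = 4 * (a + b) * x\<^sup>2"
proof (cases "a + b = 0")
  case True
  then have "a = 0" "b = 0"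
    using assms by simp_all
  then show ?thesis
    by simp
next
  case False
  then have "a + b > 0"
    using assms by simp
  moreover have "(a * y\<^sup>2 + b * y\<^sup>2) * (a + b) = 4 * (a - b)\<^sup>2 * x\<^sup>2"
    using arg_cong[OF assms(5), of "\<lambda>z. z\<^sup>2"]
    by (simp add: power2_eq_square algebra_simps)
  ultimately show ?thesis
    by (simp add: field_simps) (simp add: power2_eq_square algebra_simps)
qed

lemma SLD_information_decomposition:
  fixes p q :: "'n::{finite,linorder} \<Rightarrow> real" and \<alpha> \<Lambda> :: "'n \<Rightarrow> 'n \<Rightarrow> complex"
  assumes p_nonneg: "\<And>k. 0 \<le> p k"
    and \<Lambda>_herm: "\<And>j k. \<Lambda> k j = cnj (\<Lambda> j k)"
    and SLD: "\<And>j k. of_real ((p j + p k) / 2) * \<Lambda> j k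
      = (if j = k then of_real (q j) else 0) + of_real (p j - p k) * \<alpha> j k"
  shows "(\<Sum>i\<in>{i. p i \<noteq> 0}. (q i)\<^sup>2 / p i)
      + 4 * (\<Sum>(j,k)\<in>{(j,k). j < k}. (p j + p k) * (cmod (\<alpha> j k))\<^sup>2)
    = (\<Sum>j\<in>UNIV. \<Sum>k\<in>UNIV. p j * (cmod (\<Lambda> j k))\<^sup>2)
      + (\<Sum>(j,k)\<in>{(j,k). j < k}. 16 * p j * p k * (cmod (\<alpha> j k))\<^sup>2 / (p j + p k))"
proof -
  define f where "f j k = p j * (cmod (\<Lambda> j k))\<^sup>2" for j k
  have diagonal: "f j j = (if p j \<noteq> 0 then (q j)\<^sup>2 / p j else 0)" for j
  proof -
    have "of_real (p j) * \<Lambda> j j = of_real (q j)"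
      using SLD[of j j] by simp
    then have "\<bar>q j\<bar> = p j * cmod (\<Lambda> j j)"
      using p_nonneg[of j] by (metis norm_mult norm_of_real abs_of_nonneg)
    then have "(q j)\<^sup>2 = (p j * cmod (\<Lambda> j j))\<^sup>2"
      by (metis power2_abs)
    moreover have "f j j = (p j * cmod (\<Lambda> j j))\<^sup>2 / p j" if "p j \<noteq> 0"
      using that by (simp add: f_def power2_eq_square)
    ultimately show ?thesis
      by (simp add: f_def)
  qed
  have pair: "f j k + f k j + 16 * p j * p k * (cmod (\<alpha> j k))\<^sup>2 / (p j + p k)
      = 4 * ((p j + p k) * (cmod (\<alpha> j k))\<^sup>2)" if "j < k" for j k
  proof -
    have "of_real ((p j + p k) / 2) * \<Lambda> j k = of_real (p j - p k) * \<alpha> j k"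
      using SLD[of j k] that by simp
    then have "\<bar>(p j + p k) / 2\<bar> * cmod (\<Lambda> j k) = \<bar>p j - p k\<bar> * cmod (\<alpha> j k)"
      by (metis norm_mult norm_of_real)
    then have "(p j + p k) * cmod (\<Lambda> j k) = 2 * \<bar>p j - p k\<bar> * cmod (\<alpha> j k)"
      using p_nonneg[of j] p_nonneg[of k] by simp
    moreover have "cmod (\<Lambda> k j) = cmod (\<Lambda> j k)"
      by (simp add: \<Lambda>_herm[of j k])
    ultimately show ?thesis
      using SLD_off_diagonal_identity[OF p_nonneg[of j] p_nonneg[of k]] by (simp add: f_def)
  qed
  have "(\<Sum>i\<in>{i. p i \<noteq> 0}. (q i)\<^sup>2 / p i) = (\<Sum>j\<in>UNIV. f j j)"
    by (simp add: diagonal sum.If_cases)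
  moreover have "4 * (\<Sum>(j,k)\<in>{(j,k). j < k}. (p j + p k) * (cmod (\<alpha> j k))\<^sup>2)
      = (\<Sum>(j,k)\<in>{(j,k). j < k}. f j k + f k j)
        + (\<Sum>(j,k)\<in>{(j,k). j < k}. 16 * p j * p k * (cmod (\<alpha> j k))\<^sup>2 / (p j + p k))"
    unfolding sum_distrib_left sum.distrib[symmetric]
    by (rule sum.cong) (auto simp: pair)
  ultimately show ?thesis
    using sum_split_diagonal_pairs[of f] by (simp add: f_def)
qed

lemma SLD_information_gap_eq_0_iff:
  fixes p :: "'n::{finite,linorder} \<Rightarrow> real" and \<alpha> :: "'n \<Rightarrow> 'n \<Rightarrow> complex"
  assumes p_nonneg: "\<And>k. 0 \<le> p k" and \<alpha>_sym: "\<And>j k. cmod (\<alpha> k j) = cmod (\<alpha> j k)"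
  shows "(\<Sum>(j,k)\<in>{(j,k). j < k}. 16 * p j * p k * (cmod (\<alpha> j k))\<^sup>2 / (p j + p k)) = 0
    \<longleftrightarrow> (\<forall>j k. j \<noteq> k \<and> 0 < p j \<and> 0 < p k \<longrightarrow> \<alpha> j k = 0)"
proof -
  have term_eq_0: "16 * p j * p k * (cmod (\<alpha> j k))\<^sup>2 / (p j + p k) = 0
      \<longleftrightarrow> \<not> (0 < p j \<and> 0 < p k) \<or> \<alpha> j k = 0" for j k
    using p_nonneg[of j] p_nonneg[of k] by (auto simp: add_nonneg_eq_0_iff)
  have sym: "\<alpha> k j = 0 \<longleftrightarrow> \<alpha> j k = 0" for j k
    using \<alpha>_sym[of j k] by (metis norm_eq_zero)
  have "(\<Sum>(j,k)\<in>{(j,k). j < k}. 16 * p j * p k * (cmod (\<alpha> j k))\<^sup>2 / (p j + p k)) = 0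
      \<longleftrightarrow> (\<forall>(j,k)\<in>{(j,k). j < k}. 16 * p j * p k * (cmod (\<alpha> j k))\<^sup>2 / (p j + p k) = 0)"
    by (subst sum_nonneg_eq_0_iff) (auto simp: p_nonneg)
  also have "\<dots> \<longleftrightarrow> (\<forall>j k. j < k \<longrightarrow> 16 * p j * p k * (cmod (\<alpha> j k))\<^sup>2 / (p j + p k) = 0)"
    by auto
  also have "\<dots> \<longleftrightarrow> (\<forall>j k. j < k \<and> 0 < p j \<and> 0 < p k \<longrightarrow> \<alpha> j k = 0)"
    unfolding term_eq_0 by blast
  also have "\<dots> \<longleftrightarrow> (\<forall>j k. j \<noteq> k \<and> 0 < p j \<and> 0 < p k \<longrightarrow> \<alpha> j k = 0)"
  proof (intro iffI allI impI)
    fix j k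
    assume ordered: "\<forall>j k. j < k \<and> 0 < p j \<and> 0 < p k \<longrightarrow> \<alpha> j k = 0"
      and jk: "j \<noteq> k \<and> 0 < p j \<and> 0 < p k"
    then consider "j < k" | "k < j"
      using neq_iff by blast
    then show "\<alpha> j k = 0"
    proof cases
      case 1
      then show ?thesis
        using ordered jk by simp
    next
      case 2
      then show ?thesis
        using ordered jk sym[of j k] by simp
    qed
  qed (simp add: order.strict_implies_not_eq)
  finally show ?thesis .
qed

definition C_L_gap ::
  "(real \<Rightarrow> 'n::{finite,linorder} \<Rightarrow> real) \<Rightarrow> (real \<Rightarrow> 'n \<Rightarrow> complex^'n::{finite,linorder}) \<Rightarrow> real \<Rightarrow> real" where
  "C_L_gap p w t = (\<Sum>(j,k)\<in>{(j,k). j < k}.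
     16 * p t j * p t k * (cmod (braket (wder w t j) (w t k)))\<^sup>2 / (p t j + p t k))"

lemma wder_braket_skew:
  assumes "open I" and "\<theta> \<in> I" and "\<And>t. t \<in> I \<Longrightarrow> orthonormal (w t)"
    and "\<And>k. (\<lambda>s. w s k) differentiable (at \<theta>)"
  shows "braket (w \<theta> j) (wder w \<theta> k) + braket (wder w \<theta> j) (w \<theta> k) = 0"
  using assms(4) unfolding wder_def
  by (intro braket_derivative_of_constant[OF assms(1,2) orthonormalD[OF assms(3)]])
     (simp_all add: vector_derivative_works)

lemma trace_SLD_square_eq_C_L_minus_gap:
  fixes p :: "real \<Rightarrow> 'n::{finite,linorder} \<Rightarrow> real"
    and w :: "real \<Rightarrow> 'n \<Rightarrow> complex^'n::{finite,linorder}"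
  assumes "open I" and "\<theta> \<in> I" and orth: "\<And>t. t \<in> I \<Longrightarrow> orthonormal (w t)"
    and p_diff: "\<And>k. (\<lambda>s. p s k) differentiable (at \<theta>)"
    and w_diff: "\<And>k. (\<lambda>s. w s k) differentiable (at \<theta>)"
    and p_nonneg: "\<And>k. 0 \<le> p \<theta> k" and SLD: "is_SLD (rho p w) \<theta> L"
  shows "trace (rho p w \<theta> ** L ** L) = of_real (C_L p w \<theta> - C_L_gap p w \<theta>)"
proof -
  define q where "q k = deriv (\<lambda>s. p s k) \<theta>" for k
  define d where "d = wder w \<theta>"
  define \<alpha> where "\<alpha> j k = braket (d j) (w \<theta> k)" for j k
  define \<Lambda> where "\<Lambda> j k = braket (w \<theta> j) (L *v w \<theta> k)" for j k
  have dp: "((\<lambda>s. p s k) has_real_derivative q k) (at \<theta>)" for k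
    using p_diff by (simp add: q_def DERIV_deriv_iff_real_differentiable)
  have dw: "((\<lambda>s. w s k) has_vector_derivative d k) (at \<theta>)" for k
    using w_diff by (simp add: d_def wder_def vector_derivative_works)
  have herm: "hermitian L"
    and SLD_eq: "vector_derivative (rho p w) (at \<theta>) = (1/2) *\<^sub>R (rho p w \<theta> ** L + L ** rho p w \<theta>)"
    using SLD by (simp_all add: is_SLD_def)
  have "vector_derivative (rho p w) (at \<theta>) = (\<Sum>k\<in>UNIV. q k *\<^sub>R ketbra (w \<theta> k) (w \<theta> k)
      + p \<theta> k *\<^sub>R (ketbra (w \<theta> k) (d k) + ketbra (d k) (w \<theta> k)))"
    by (rule vector_derivative_at[OF has_vector_derivative_rho[OF dp dw]])
  with SLD_eq have \<rho>': "(\<Sum>k\<in>UNIV. q k *\<^sub>R ketbra (w \<theta> k) (w \<theta> k)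
      + p \<theta> k *\<^sub>R (ketbra (w \<theta> k) (d k) + ketbra (d k) (w \<theta> k)))
      = (1/2) *\<^sub>R (rho p w \<theta> ** L + L ** rho p w \<theta>)"
    by simp
  have skew: "braket (w \<theta> j) (d k) + braket (d j) (w \<theta> k) = 0" for j k
    unfolding d_def by (rule wder_braket_skew[OF assms(1,2) orth w_diff])
  have sld: "of_real ((p \<theta> j + p \<theta> k) / 2) * \<Lambda> j k
      = (if j = k then of_real (q j) else 0) + of_real (p \<theta> j - p \<theta> k) * \<alpha> j k" for j k
    unfolding \<Lambda>_def \<alpha>_def
    by (rule SLD_equation_in_eigenbasis[where w = w and t = \<theta>, OF orth[OF assms(2)] skew \<rho>'])
  have \<Lambda>_herm: "\<Lambda> k j = cnj (\<Lambda> j k)" for j k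
    unfolding \<Lambda>_def by (rule hermitian_braket[OF herm])
  have "C_L p w \<theta> = (\<Sum>i\<in>{i. p \<theta> i \<noteq> 0}. (q i)\<^sup>2 / p \<theta> i)
      + 4 * (\<Sum>(j,k)\<in>{(j,k). j < k}. (p \<theta> j + p \<theta> k) * (cmod (\<alpha> j k))\<^sup>2)"
    by (simp add: C_L_def q_def \<alpha>_def d_def)
  also have "\<dots> = (\<Sum>j\<in>UNIV. \<Sum>k\<in>UNIV. p \<theta> j * (cmod (\<Lambda> j k))\<^sup>2) + C_L_gap p w \<theta>"
    unfolding C_L_gap_def d_def[symmetric] \<alpha>_def[symmetric]
    by (rule SLD_information_decomposition[OF p_nonneg \<Lambda>_herm sld])
  finally show ?thesis
    unfolding \<Lambda>_def
    by (simp add: trace_rho_mult_hermitian_square[where w = w and t = \<theta>, OF orth[OF assms(2)] herm])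
qed

theorem lemma3:
  fixes I :: "real set" and \<theta> :: real
    and p :: "real \<Rightarrow> 'n::{finite,linorder} \<Rightarrow> real"
    and w :: "real \<Rightarrow> 'n::{finite,linorder} \<Rightarrow> complex^'n::{finite,linorder}"
    and L :: "complex^'n::{finite,linorder}^'n::{finite,linorder}"
  assumes I: "open I" "is_interval I" and th: "\<theta> \<in> I"
    and p_smooth: "\<And>k. smooth_on I (\<lambda>t. p t k)"
    and p_range: "\<And>t k. t \<in> I \<Longrightarrow> 0 \<le> p t k \<and> p t k \<le> 1"
    and p_sum: "\<And>t. t \<in> I \<Longrightarrow> (\<Sum>k\<in>UNIV. p t k) = 1"
    and w_smooth: "\<And>k. smooth_on I (\<lambda>t. w t k)"
    and w_orth: "\<And>t j k. t \<in> I \<Longrightarrow> braket (w t j) (w t k) = (if j = k then 1 else 0)"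
    and SLD: "is_SLD (rho p w) \<theta> L"
  shows "(trace (rho p w \<theta> ** L ** L) = complex_of_real (C_L p w \<theta>)
            \<longleftrightarrow> (\<forall>j k. j \<noteq> k \<and> p \<theta> j > 0 \<and> p \<theta> k > 0 \<longrightarrow> braket (wder w \<theta> j) (w \<theta> k) = 0))
       \<and> ((\<exists>\<psi>. rho p w \<theta> = ketbra \<psi> \<psi>) \<longrightarrow> trace (rho p w \<theta> ** L ** L) = complex_of_real (C_L p w \<theta>))"
proof -
  have orth: "orthonormal (w t)" if "t \<in> I" for t
    using w_orth[OF that] by (simp add: orthonormal_def)
  have p_nonneg: "0 \<le> p \<theta> k" for k
    using p_range[OF th] by simp
  have p_diff: "(\<lambda>s. p s k) differentiable (at \<theta>)"
    and w_diff: "(\<lambda>s. w s k) differentiable (at \<theta>)" for k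
    using smooth_on_differentiable[OF p_smooth th] smooth_on_differentiable[OF w_smooth th] by auto
  have norm_sym: "cmod (braket (wder w \<theta> k) (w \<theta> j)) = cmod (braket (wder w \<theta> j) (w \<theta> k))" for j k
  proof -
    have "braket (wder w \<theta> k) (w \<theta> j) = - cnj (braket (wder w \<theta> j) (w \<theta> k))"
      using wder_braket_skew[OF I(1) th orth w_diff, of k j] unfolding add_eq_0_iff
      by (simp add: braket_cnj)
    then show ?thesis
      by simp
  qed
  have "trace (rho p w \<theta> ** L ** L) = of_real (C_L p w \<theta>) \<longleftrightarrow> C_L_gap p w \<theta> = 0"
    using trace_SLD_square_eq_C_L_minus_gap[OF I(1) th orth p_diff w_diff p_nonneg SLD] by simp
  also have "\<dots> \<longleftrightarrow> (\<forall>j k. j \<noteq> k \<and> 0 < p \<theta> j \<and> 0 < p \<theta> k \<longrightarrow> braket (wder w \<theta> j) (w \<theta> k) = 0)"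
    unfolding C_L_gap_def by (rule SLD_information_gap_eq_0_iff[OF p_nonneg norm_sym])
  finally show ?thesis
    using pure_rho_eigenvalues[where w = w and t = \<theta>, OF orth[OF th]] by fastforce
qed

end
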